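(* Let $H_1$ and $H_2$ be groups, where $H_2$ does not have exponential growth. Let $G\leqslant H_1\times H_2$ be finitely generated, such that the restriction to $G$ of the projection $H_1\times H_2\to H_1$ is infinite-to-1. Then for any constants $\alpha,\beta>0$ there exists a finite generating set $U$ of $G$ such that $|U^n|<(\alpha|U|)^{\beta n}$ for some $n\in\mathbb{N}$.
   Context: For a finitely generated group $G$ with finite generating set $S$, let $B_S(n)$ be the ball of radius $n$ about the identity in the word metric of $S$, and $\omega(G,S)=\lim_{n\to\infty}|B_S(n)|^{1/n}$; $G$ has exponential growth if $\omega(G,S)>1$ (for some, equivalently every, finite generating set $S$). A group not assumed finitely generated is said not to have exponential growth if none of its finitely generated subgroups has exponential growth. $U^n=\{u_1\cdots u_n:u_i\in U\}$. A homomorphism is infinite-to-1 if its kernel is infinite. *)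

theory Defs
  imports "HOL-Analysis.Analysis" "HOL-Algebra.Algebra"
begin

definition list_prod :: "('a, 'b) monoid_scheme \<Rightarrow> 'a list \<Rightarrow> 'a" where
  "list_prod G xs = foldr (\<lambda>x y. x \<otimes>\<^bsub>G\<^esub> y) xs \<one>\<^bsub>G\<^esub>"

definition word_ball :: "('a, 'b) monoid_scheme \<Rightarrow> 'a set \<Rightarrow> nat \<Rightarrow> 'a set" where
  "word_ball G S n = {list_prod G xs | xs. length xs \<le> n \<and> set xs \<subseteq> S \<union> (\<lambda>s. inv\<^bsub>G\<^esub> s) ` S}"

definition growth_rate :: "('a, 'b) monoid_scheme \<Rightarrow> 'a set \<Rightarrow> real" where
  "growth_rate G S = lim (\<lambda>n. real (card (word_ball G S n)) powr (1 / real n))"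

definition exp_growth_wrt :: "('a, 'b) monoid_scheme \<Rightarrow> 'a set \<Rightarrow> bool" where
  "exp_growth_wrt G S \<longleftrightarrow> growth_rate G S > 1"

definition no_exp_growth :: "('a, 'b) monoid_scheme \<Rightarrow> bool" where
  "no_exp_growth G \<longleftrightarrow> (\<forall>S. finite S \<and> S \<subseteq> carrier G \<longrightarrow> \<not> exp_growth_wrt G S)"

definition set_pow :: "('a, 'b) monoid_scheme \<Rightarrow> 'a set \<Rightarrow> nat \<Rightarrow> 'a set" where
  "set_pow G U n = {list_prod G xs | xs. length xs = n \<and> set xs \<subseteq> U}"

end

theory Submission
  imports Defs
begin

text \<open>Enlarge a finite generating set \<open>S\<close> of \<open>G\<close> by \<open>m\<close> elements of the (infinite) kernel of the
first projection. The first coordinates of the new generating set \<open>U\<close> then take at most \<open>|S| + 1\<close>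
values, while the second coordinates of a product of \<open>n\<close> elements of \<open>U\<close> lie in a ball of radius
\<open>n\<close> of a finitely generated subgroup of \<open>H\<^sub>2\<close>, which has fewer than \<open>2\<^sup>n\<close> elements for large \<open>n\<close>.
Hence \<open>|U\<^sup>n| < (2(|S| + 1))\<^sup>n\<close>, and for \<open>m\<close> large this is at most \<open>(\<alpha>|U|)\<^bsup>\<beta>n\<^esup>\<close>.
The growth rate is a genuine limit by Fekete's lemma, since ball sizes are submultiplicative.\<close>

lemma subadditive_le_mult_add:
  fixes a :: "nat \<Rightarrow> real"
  assumes sub: "\<And>m n. a (m + n) \<le> a m + a n"
  shows "a (q * k + r) \<le> real q * a k + a r"
proof (induction q)
  case 0
  then show ?case by simp
next
  case (Suc q)
  have "a (Suc q * k + r) = a (k + (q * k + r))" by (simp add: algebra_simps)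
  also have "\<dots> \<le> a k + a (q * k + r)" by (rule sub)
  also have "\<dots> \<le> real (Suc q) * a k + a r" using Suc by (simp add: algebra_simps)
  finally show ?case .
qed

lemma subadditive_quotient_le:
  fixes a :: "nat \<Rightarrow> real"
  assumes nonneg: "\<And>n. a n \<ge> 0" and sub: "\<And>m n. a (m + n) \<le> a m + a n"
    and "k > 0" "n > 0"
  shows "a n / real n \<le> a k / real k + Max (a ` {..<k}) / real n"
proof -
  have "a n \<le> real (n div k) * a k + a (n mod k)"
    using subadditive_le_mult_add[OF sub, of "n div k" k "n mod k"] by simp
  also have "\<dots> \<le> real n / real k * a k + Max (a ` {..<k})"
  proof (intro add_mono mult_right_mono Max_ge)
    have "real (n div k) * real k \<le> real n"
      by (metis of_nat_le_iff of_nat_mult div_times_less_eq_dividend)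
    then show "real (n div k) \<le> real n / real k"
      using \<open>k > 0\<close> by (simp add: field_simps)
  qed (use nonneg \<open>k > 0\<close> in auto)
  finally show ?thesis
    using \<open>k > 0\<close> \<open>n > 0\<close> by (simp add: field_simps)
qed

lemma fekete_subadditive:
  fixes a :: "nat \<Rightarrow> real"
  assumes nonneg: "\<And>n. a n \<ge> 0" and sub: "\<And>m n. a (m + n) \<le> a m + a n"
  shows "(\<lambda>n. a n / real n) \<longlonglongrightarrow> Inf ((\<lambda>n. a n / real n) ` {1..})"
proof -
  let ?Q = "(\<lambda>n. a n / real n) ` {1..}"
  have bdd: "bdd_below ?Q"
    by (rule bdd_belowI[of _ 0]) (auto intro: divide_nonneg_nonneg nonneg)
  show ?thesis
  proof (rule order_tendstoI)
    fix y assume "y < Inf ?Q"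
    have "Inf ?Q \<le> a n / real n" if "n \<ge> 1" for n
      using that by (intro cInf_lower[OF _ bdd]) auto
    with \<open>y < Inf ?Q\<close> show "eventually (\<lambda>n. y < a n / real n) sequentially"
      unfolding eventually_sequentially by (meson less_le_trans)
  next
    fix y assume "Inf ?Q < y"
    then obtain k where "k \<ge> 1" "a k / real k < y"
      using cInf_less_iff[OF _ bdd] by auto
    have "(\<lambda>n. a k / real k + Max (a ` {..<k}) / real n) \<longlonglongrightarrow> a k / real k"
      using tendsto_add[OF tendsto_const lim_const_over_n, of "a k / real k" "Max (a ` {..<k})"]
      by simp
    from order_tendstoD(2)[OF this \<open>a k / real k < y\<close>] eventually_gt_at_top[of 0]
    show "eventually (\<lambda>n. a n / real n < y) sequentially"
    proof eventually_elim
      case (elim n)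
      then show ?case
        using subadditive_quotient_le[OF nonneg sub, of k n] \<open>k \<ge> 1\<close> by linarith
    qed
  qed
qed

lemma submultiplicative_root_convergent:
  fixes b :: "nat \<Rightarrow> real"
  assumes ge1: "\<And>n. b n \<ge> 1" and submult: "\<And>m n. b (m + n) \<le> b m * b n"
  shows "convergent (\<lambda>n. b n powr (1 / real n))"
proof -
  have "(\<lambda>n. ln (b n) / real n) \<longlonglongrightarrow> Inf ((\<lambda>n. ln (b n) / real n) ` {1..})"
  proof (rule fekete_subadditive)
    show "ln (b n) \<ge> 0" for n
      using ge1[of n] by simp
    show "ln (b (m + n)) \<le> ln (b m) + ln (b n)" for m n
    proof -
      have "ln (b (m + n)) \<le> ln (b m * b n)"
        using submult[of m n] ge1[of "m + n"] by (intro ln_mono) auto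
      also have "\<dots> = ln (b m) + ln (b n)"
        using ge1[of m] ge1[of n] by (intro ln_mult_pos) auto
      finally show ?thesis .
    qed
  qed
  then have "(\<lambda>n. exp (ln (b n) / real n)) \<longlonglongrightarrow> exp (Inf ((\<lambda>n. ln (b n) / real n) ` {1..}))"
    by (rule tendsto_exp)
  moreover have "exp (ln (b n) / real n) = b n powr (1 / real n)" for n
    using ge1[of n] by (simp add: powr_def)
  ultimately show ?thesis
    by (auto simp: convergent_def)
qed

lemma list_prod_closed:
  assumes "monoid G" "set xs \<subseteq> carrier G"
  shows "list_prod G xs \<in> carrier G"
  using assms(2)
  by (induction xs) (auto simp: list_prod_def monoid.m_closed[OF assms(1)] monoid.one_closed[OF assms(1)])

lemma list_prod_append:
  assumes G: "monoid G" and "set xs \<subseteq> carrier G" "set ys \<subseteq> carrier G"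
  shows "list_prod G (xs @ ys) = list_prod G xs \<otimes>\<^bsub>G\<^esub> list_prod G ys"
  using assms(2)
proof (induction xs)
  case Nil
  then show ?case
    using list_prod_closed[OF G assms(3)] by (simp add: list_prod_def monoid.l_one[OF G])
next
  case (Cons x xs)
  then show ?case
    using list_prod_closed[OF G] assms(3) by (simp add: list_prod_def monoid.m_assoc[OF G])
qed

lemma list_prod_DirProd:
  "list_prod (G \<times>\<times> H) xs = (list_prod G (map fst xs), list_prod H (map snd xs))"
  by (induction xs) (auto simp: list_prod_def mult_DirProd')

lemma set_pow_subset_image: "set_pow G U n \<subseteq> list_prod G ` {xs. set xs \<subseteq> U \<and> length xs = n}"
  unfolding set_pow_def by auto

lemma finite_set_pow: "finite U \<Longrightarrow> finite (set_pow G U n)"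
  by (rule finite_subset[OF set_pow_subset_image]) (auto intro: finite_lists_length_eq)

lemma card_set_pow_le:
  assumes "finite U"
  shows "card (set_pow G U n) \<le> card U ^ n"
proof -
  have "card (set_pow G U n) \<le> card (list_prod G ` {xs. set xs \<subseteq> U \<and> length xs = n})"
    by (rule card_mono[OF _ set_pow_subset_image]) (auto intro: finite_lists_length_eq assms)
  also have "\<dots> \<le> card {xs. set xs \<subseteq> U \<and> length xs = n}"
    by (rule card_image_le) (auto intro: finite_lists_length_eq assms)
  also have "\<dots> = card U ^ n"
    using assms by (rule card_lists_length_eq)
  finally show ?thesis .
qed

lemma set_pow_subset_word_ball: "set_pow G U n \<subseteq> word_ball G U n"
  unfolding set_pow_def word_ball_def by auto

lemma finite_word_ball:
  assumes "finite T"
  shows "finite (word_ball G T n)"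
proof -
  have "word_ball G T n \<subseteq>
      list_prod G ` {xs. set xs \<subseteq> T \<union> (\<lambda>s. inv\<^bsub>G\<^esub> s) ` T \<and> length xs \<le> n}"
    unfolding word_ball_def by auto
  then show ?thesis
    by (rule finite_subset) (auto intro: finite_lists_length_le assms)
qed

lemma card_word_ball_gt_0:
  assumes "finite T"
  shows "card (word_ball G T n) > 0"
proof -
  have "\<one>\<^bsub>G\<^esub> \<in> word_ball G T n"
    unfolding word_ball_def by (auto intro!: exI[of _ "[]"] simp: list_prod_def)
  then show ?thesis
    using finite_word_ball[OF assms] card_gt_0_iff by blast
qed

lemma word_ball_add_subset:
  assumes G: "group G" and T: "T \<subseteq> carrier G"
  shows "word_ball G T (m + n) \<subseteq> (\<lambda>(x, y). x \<otimes>\<^bsub>G\<^esub> y) ` (word_ball G T m \<times> word_ball G T n)"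
proof
  let ?A = "T \<union> (\<lambda>s. inv\<^bsub>G\<^esub> s) ` T"
  fix z assume "z \<in> word_ball G T (m + n)"
  then obtain xs where z: "z = list_prod G xs" and "length xs \<le> m + n" and "set xs \<subseteq> ?A"
    unfolding word_ball_def by auto
  have "set xs \<subseteq> carrier G"
    using \<open>set xs \<subseteq> ?A\<close> T group.inv_closed[OF G] by auto
  have "z = list_prod G (take m xs @ drop m xs)"
    using z by simp
  also have "\<dots> = list_prod G (take m xs) \<otimes>\<^bsub>G\<^esub> list_prod G (drop m xs)"
    using \<open>set xs \<subseteq> carrier G\<close>
    by (intro list_prod_append[OF group.is_monoid[OF G]]) (auto dest: in_set_takeD in_set_dropD)
  finally have "z = list_prod G (take m xs) \<otimes>\<^bsub>G\<^esub> list_prod G (drop m xs)" .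
  moreover have "list_prod G (take m xs) \<in> word_ball G T m"
    using \<open>set xs \<subseteq> ?A\<close> set_take_subset[of m xs] unfolding word_ball_def by fastforce
  moreover have "list_prod G (drop m xs) \<in> word_ball G T n"
    using \<open>set xs \<subseteq> ?A\<close> \<open>length xs \<le> m + n\<close> set_drop_subset[of m xs]
    unfolding word_ball_def by fastforce
  ultimately show "z \<in> (\<lambda>(x, y). x \<otimes>\<^bsub>G\<^esub> y) ` (word_ball G T m \<times> word_ball G T n)"
    by force
qed

lemma card_word_ball_add_le:
  assumes "group G" "T \<subseteq> carrier G" "finite T"
  shows "card (word_ball G T (m + n)) \<le> card (word_ball G T m) * card (word_ball G T n)"
proof -
  have "card (word_ball G T (m + n))
      \<le> card ((\<lambda>(x, y). x \<otimes>\<^bsub>G\<^esub> y) ` (word_ball G T m \<times> word_ball G T n))"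
    by (rule card_mono[OF _ word_ball_add_subset[OF assms(1,2)]])
      (auto intro: finite_word_ball assms(3))
  also have "\<dots> \<le> card (word_ball G T m \<times> word_ball G T n)"
    by (rule card_image_le) (auto intro: finite_word_ball assms(3))
  finally show ?thesis
    by (simp add: card_cartesian_product)
qed

lemma word_ball_growth_rate:
  assumes "group G" "T \<subseteq> carrier G" "finite T"
  shows "(\<lambda>n. real (card (word_ball G T n)) powr (1 / real n)) \<longlonglongrightarrow> growth_rate G T"
proof -
  have "convergent (\<lambda>n. real (card (word_ball G T n)) powr (1 / real n))"
  proof (rule submultiplicative_root_convergent)
    show "real (card (word_ball G T n)) \<ge> 1" for n
      using card_word_ball_gt_0[OF assms(3)] by (simp add: Suc_le_eq)
    show "real (card (word_ball G T (m + n)))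
        \<le> real (card (word_ball G T m)) * real (card (word_ball G T n))" for m n
      using card_word_ball_add_le[OF assms] by (simp flip: of_nat_mult)
  qed
  then show ?thesis
    unfolding growth_rate_def by (simp add: convergent_LIMSEQ_iff)
qed

lemma eventually_card_word_ball_less_power:
  assumes "group G" "no_exp_growth G" "T \<subseteq> carrier G" "finite T" "c > 1"
  shows "eventually (\<lambda>n. real (card (word_ball G T n)) < c ^ n) sequentially"
proof -
  have "growth_rate G T < c"
    using assms unfolding no_exp_growth_def exp_growth_wrt_def by force
  then have "eventually (\<lambda>n. real (card (word_ball G T n)) powr (1 / real n) < c) sequentially"
    using word_ball_growth_rate[OF assms(1,3,4)] by (auto dest: order_tendstoD(2))
  with eventually_gt_at_top[of 0] show ?thesis
  proof eventually_elim
    case (elim n)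
    have "real (card (word_ball G T n)) = (real (card (word_ball G T n)) powr (1 / real n)) powr n"
      using elim(1) card_word_ball_gt_0[OF assms(4), of G n] by (simp add: powr_powr)
    also have "\<dots> < c powr n"
      using elim by (intro powr_less_mono2) auto
    also have "\<dots> = c ^ n"
      using assms(5) by (simp add: powr_realpow)
    finally show ?case .
  qed
qed

lemma set_pow_DirProd_subset:
  "set_pow (G \<times>\<times> H) U n \<subseteq> set_pow G (fst ` U) n \<times> set_pow H (snd ` U) n"
  unfolding set_pow_def by (force simp: list_prod_DirProd)

lemma card_set_pow_DirProd_le:
  assumes "finite U"
  shows "card (set_pow (G \<times>\<times> H) U n) \<le> card (fst ` U) ^ n * card (word_ball H (snd ` U) n)"
proof -
  have "set_pow (G \<times>\<times> H) U n \<subseteq> set_pow G (fst ` U) n \<times> word_ball H (snd ` U) n"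
    by (rule order_trans[OF set_pow_DirProd_subset])
      (intro Sigma_mono set_pow_subset_word_ball order_refl)
  then have "card (set_pow (G \<times>\<times> H) U n)
      \<le> card (set_pow G (fst ` U) n \<times> word_ball H (snd ` U) n)"
    by (rule card_mono[rotated]) (auto intro: finite_set_pow finite_word_ball assms)
  also have "\<dots> \<le> card (fst ` U) ^ n * card (word_ball H (snd ` U) n)"
    unfolding card_cartesian_product using card_set_pow_le[OF finite_imageI[OF assms]]
    by (intro mult_right_mono) auto
  finally show ?thesis .
qed

lemma eventually_card_set_pow_DirProd_less:
  assumes "group H" "no_exp_growth H" "finite U" "U \<noteq> {}" "snd ` U \<subseteq> carrier H" "c > 1"
  shows "eventually (\<lambda>n. real (card (set_pow (G \<times>\<times> H) U n)) < (c * real (card (fst ` U))) ^ n)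
    sequentially"
  using eventually_card_word_ball_less_power[OF assms(1,2,5) finite_imageI[OF assms(3)] assms(6)]
proof eventually_elim
  case (elim n)
  have "real (card (set_pow (G \<times>\<times> H) U n))
      \<le> real (card (fst ` U) ^ n * card (word_ball H (snd ` U) n))"
    using card_set_pow_DirProd_le[OF assms(3)] by (rule of_nat_mono)
  also have "\<dots> < real (card (fst ` U)) ^ n * c ^ n"
    using elim assms(3,4) by (simp add: card_gt_0_iff)
  also have "\<dots> = (c * real (card (fst ` U))) ^ n"
    by (simp add: power_mult_distrib mult.commute)
  finally show ?case .
qed

lemma extend_generating_set:
  assumes "group P" "subgroup G P" "finite S" "S \<subseteq> G" "generate P S = G"
    and "infinite K" "K \<subseteq> G"
  obtains U where "finite U" "U \<subseteq> S \<union> K" "generate P U = G" "card U = card S + m"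
proof -
  obtain F where F: "finite F" "card F = m" "F \<subseteq> K - S"
    using infinite_arbitrarily_large[of "K - S" m] assms(3,6) by auto
  have "generate P (S \<union> F) = G"
  proof
    show "generate P (S \<union> F) \<subseteq> G"
      using F assms by (intro group.generate_subgroup_incl) auto
    show "G \<subseteq> generate P (S \<union> F)"
      using group.mono_generate[OF assms(1), of S "S \<union> F"] assms(5) by auto
  qed
  moreover have "card (S \<union> F) = card S + m"
    using F assms(3) by (subst card_Un_disjoint) auto
  ultimately show thesis
    using that[of "S \<union> F"] F assms(3) by auto
qed

lemma extend_generating_set_DirProd_kernel:
  assumes "group H1" "group H2" "subgroup G (H1 \<times>\<times> H2)"
    and "finite S" "S \<subseteq> G" "generate (H1 \<times>\<times> H2) S = G"
    and "infinite {g \<in> G. fst g = \<one>\<^bsub>H1\<^esub>}"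
  obtains U where "finite U" "U \<subseteq> G" "generate (H1 \<times>\<times> H2) U = G" "m \<le> card U"
    "card (fst ` U) \<le> card S + 1"
proof -
  obtain U where U: "finite U" "U \<subseteq> S \<union> {g \<in> G. fst g = \<one>\<^bsub>H1\<^esub>}"
      "generate (H1 \<times>\<times> H2) U = G" "card U = card S + m"
    using extend_generating_set[OF DirProd_group[OF assms(1,2)] assms(3-7)] by blast
  have "fst ` U \<subseteq> insert \<one>\<^bsub>H1\<^esub> (fst ` S)"
    using U(2) by auto
  then have "card (fst ` U) \<le> card (insert \<one>\<^bsub>H1\<^esub> (fst ` S))"
    using assms(4) by (intro card_mono) auto
  also have "\<dots> \<le> card S + 1"
    using card_image_le[OF assms(4), of fst] assms(4) by (simp add: card_insert_if)
  finally have "card (fst ` U) \<le> card S + 1" .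
  moreover have "U \<subseteq> G"
    using U(2) assms(5) by blast
  ultimately show thesis
    using that[OF U(1) _ U(3)] U(4) by simp
qed

lemma power_le_powr_scaled:
  fixes x \<alpha> \<beta> u :: real
  assumes "x > 0" "\<alpha> > 0" "\<beta> > 0" "u \<ge> x powr (1 / \<beta>) / \<alpha>"
  shows "x ^ n \<le> (\<alpha> * u) powr (\<beta> * n)"
proof -
  have "x powr (1 / \<beta>) \<le> \<alpha> * u"
    using assms by (simp add: field_simps)
  then have "(x powr (1 / \<beta>)) powr \<beta> \<le> (\<alpha> * u) powr \<beta>"
    using assms by (intro powr_mono2) auto
  then have "x \<le> (\<alpha> * u) powr \<beta>"
    using assms by (simp add: powr_powr)
  then have "x ^ n \<le> ((\<alpha> * u) powr \<beta>) ^ n"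
    using assms by (intro power_mono) auto
  also have "\<dots> = ((\<alpha> * u) powr \<beta>) powr n"
    using \<open>x \<le> (\<alpha> * u) powr \<beta>\<close> \<open>x > 0\<close> by (subst powr_realpow) auto
  also have "\<dots> = (\<alpha> * u) powr (\<beta> * n)"
    by (simp add: powr_powr)
  finally show ?thesis .
qed

theorem proposition2p18:
  fixes H1 :: "('a, 'c) monoid_scheme" and H2 :: "('b, 'd) monoid_scheme"
    and G :: "('a \<times> 'b) set"
  assumes "group H1" and "group H2"
    and "no_exp_growth H2"
    and "subgroup G (H1 \<times>\<times> H2)"
    and "\<exists>S. finite S \<and> S \<subseteq> G \<and> generate (H1 \<times>\<times> H2) S = G"
    and "infinite {g \<in> G. fst g = \<one>\<^bsub>H1\<^esub>}"
  shows "\<forall>\<alpha> \<beta> :: real. \<alpha> > 0 \<and> \<beta> > 0 \<longrightarrow>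
           (\<exists>U. finite U \<and> U \<subseteq> G \<and> generate (H1 \<times>\<times> H2) U = G \<and>
              (\<exists>n::nat. real (card (set_pow (H1 \<times>\<times> H2) U n))
                        < (\<alpha> * real (card U)) powr (\<beta> * real n)))"
proof (intro allI impI)
  fix \<alpha> \<beta> :: real assume "\<alpha> > 0 \<and> \<beta> > 0"
  obtain S where S: "finite S" "S \<subseteq> G" "generate (H1 \<times>\<times> H2) S = G"
    using assms(5) by blast
  define x where "x = 2 * (real (card S) + 1)"
  obtain U where U: "finite U" "U \<subseteq> G" "generate (H1 \<times>\<times> H2) U = G"
    and card_U: "nat \<lceil>x powr (1 / \<beta>) / \<alpha>\<rceil> \<le> card U"
    and card_fst: "card (fst ` U) \<le> card S + 1"
    using extend_generating_set_DirProd_kernel[OF assms(1,2,4) S assms(6)] by blast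
  have U_large: "x powr (1 / \<beta>) / \<alpha> \<le> real (card U)"
    using real_nat_ceiling_ge[of "x powr (1 / \<beta>) / \<alpha>"] card_U by linarith
  moreover have "x powr (1 / \<beta>) / \<alpha> > 0"
    using \<open>\<alpha> > 0 \<and> \<beta> > 0\<close> unfolding x_def by simp
  ultimately have "U \<noteq> {}"
    by auto
  moreover have "snd ` U \<subseteq> carrier H2"
    using U(2) subgroup.subset[OF assms(4)] by auto
  ultimately have "eventually (\<lambda>n. real (card (set_pow (H1 \<times>\<times> H2) U n))
      < (2 * real (card (fst ` U))) ^ n) sequentially"
    by (intro eventually_card_set_pow_DirProd_less[OF assms(2,3) U(1)]) auto
  then obtain N where "real (card (set_pow (H1 \<times>\<times> H2) U N)) < (2 * real (card (fst ` U))) ^ N"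
    using eventually_happens'[OF sequentially_bot] by blast
  also have "\<dots> \<le> x ^ N"
    using card_fst unfolding x_def by (intro power_mono) auto
  also have "\<dots> \<le> (\<alpha> * real (card U)) powr (\<beta> * real N)"
    using U_large \<open>\<alpha> > 0 \<and> \<beta> > 0\<close> unfolding x_def by (intro power_le_powr_scaled) auto
  finally show "\<exists>U. finite U \<and> U \<subseteq> G \<and> generate (H1 \<times>\<times> H2) U = G \<and>
      (\<exists>n::nat. real (card (set_pow (H1 \<times>\<times> H2) U n)) < (\<alpha> * real (card U)) powr (\<beta> * real n))"
    using U(1-3) by blast
qed

end
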